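(* Let $K$ be a polygonal knot with vertices $v_1,\dots,v_n$ and edges $e_1,\dots,e_n$ (indices mod $n$). Then for each $i$, $$MD(e_i,v_{i+2}) \geq \min\{2\,MinRad(K),\,MinEdge(K)\},$$ and in particular, when $angle(v_{i+1})\geq \pi/2$, we have $MD(e_i,v_{i+2}) \geq 2\,MinRad(K)$. Similarly, $MD(e_i,v_{i-1}) \geq \min\{2\,MinRad(K),\,MinEdge(K)\}$, and when $angle(v_{i})\geq \pi/2$, $MD(e_i,v_{i-1}) \geq 2\,MinRad(K)$.
   Context: A polygonal knot $K$ with $n$ edges is given by distinct vertices $v_1,\dots,v_n\in\mathbb{R}^3$ (indices taken mod $n$), with edges $e_i$ the straight segment from $v_i$ to $v_{i+1}$, such that edges meet only at the common vertex of adjacent edges. $|e_i|$ denotes the length of $e_i$; $MinEdge(K)=\min_i|e_i|$. $angle(v_i)\in[0,\pi)$ is the turning angle at $v_i$, i.e. the angle between the vectors $v_i-v_{i-1}$ and $v_{i+1}-v_i$. Define $Rad(v_i)=\dfrac{\min\{|e_{i-1}|,|e_i|\}}{2\tan(angle(v_i)/2)}$ (equal to $+\infty$ if $angle(v_i)=0$) and $MinRad(K)=\min_i Rad(v_i)$. For an edge $e$ and vertex $v$, $MD(e,v)$ denotes the minimum Euclidean distance between the edge $e$ and the point $v$. *)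

theory Defs
  imports "HOL-Analysis.Analysis" "HOL-Library.Extended_Real"
begin

text \<open>A polygonal knot with n edges is given by P :: nat => real^3, vertices P 0, ..., P (n-1).
  Vertex indices are integers taken modulo n.\<close>

definition vx :: "(nat \<Rightarrow> real^3) \<Rightarrow> nat \<Rightarrow> int \<Rightarrow> real^3" where
  "vx P n i = P (nat (i mod int n))"

definition edge :: "(nat \<Rightarrow> real^3) \<Rightarrow> nat \<Rightarrow> int \<Rightarrow> (real^3) set" where
  "edge P n i = closed_segment (vx P n i) (vx P n (i + 1))"

definition edge_len :: "(nat \<Rightarrow> real^3) \<Rightarrow> nat \<Rightarrow> int \<Rightarrow> real" where
  "edge_len P n i = dist (vx P n i) (vx P n (i + 1))"

definition polygonal_knot :: "(nat \<Rightarrow> real^3) \<Rightarrow> nat \<Rightarrow> bool" where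
  "polygonal_knot P n \<longleftrightarrow> n \<ge> 3 \<and> inj_on P {..<n} \<and>
     (\<forall>i j. 0 \<le> i \<and> i < int n \<and> 0 \<le> j \<and> j < int n \<and> i \<noteq> j \<longrightarrow>
        (if j = (i + 1) mod int n then edge P n i \<inter> edge P n j = {vx P n j}
         else if i = (j + 1) mod int n then edge P n i \<inter> edge P n j = {vx P n i}
         else edge P n i \<inter> edge P n j = {}))"

definition vec_angle :: "real^3 \<Rightarrow> real^3 \<Rightarrow> real" where
  "vec_angle a b = arccos ((a \<bullet> b) / (norm a * norm b))"

definition turn_angle :: "(nat \<Rightarrow> real^3) \<Rightarrow> nat \<Rightarrow> int \<Rightarrow> real" where
  "turn_angle P n i = vec_angle (vx P n i - vx P n (i - 1)) (vx P n (i + 1) - vx P n i)"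

definition Rad :: "(nat \<Rightarrow> real^3) \<Rightarrow> nat \<Rightarrow> int \<Rightarrow> ereal" where
  "Rad P n i = (if turn_angle P n i = 0 then \<infinity>
     else ereal (min (edge_len P n (i - 1)) (edge_len P n i) / (2 * tan (turn_angle P n i / 2))))"

definition MinRad :: "(nat \<Rightarrow> real^3) \<Rightarrow> nat \<Rightarrow> ereal" where
  "MinRad P n = Min (Rad P n ` {0..<int n})"

definition MinEdge :: "(nat \<Rightarrow> real^3) \<Rightarrow> nat \<Rightarrow> real" where
  "MinEdge P n = Min (edge_len P n ` {0..<int n})"

definition MD :: "(real^3) set \<Rightarrow> real^3 \<Rightarrow> real" where
  "MD e v = infdist v e"

end

theory Submission
  imports Defs
begin

(*
  Write u = v_(i+1) - v_i, w = v_(i+2) - v_(i+1) and let \<theta> be the turning angle at v_(i+1).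
  If u \<bullet> w \<ge> 0 (so \<theta> \<le> pi/2), the point of e_i nearest to v_(i+2) is v_(i+1), hence
  MD(e_i, v_(i+2)) \<ge> |w| \<ge> MinEdge. If \<theta> \<ge> pi/2, MD(e_i, v_(i+2)) is at least the distance
  |w| sin \<theta> from v_(i+2) to the line through e_i, and 2 sin\<^sup>2(\<theta>/2) = 1 - cos \<theta> \<ge> 1 gives
  |w| sin \<theta> = 2 |w| sin(\<theta>/2) cos(\<theta>/2) \<ge> |w| / tan(\<theta>/2) \<ge> 2 Rad(v_(i+1)).
  The bounds for v_(i-1) are the same argument applied to the reversed corner v_(i+1), v_i, v_(i-1).
*)

lemma infdist_geI: "A \<noteq> {} \<Longrightarrow> (\<And>a. a \<in> A \<Longrightarrow> r \<le> dist x a) \<Longrightarrow> r \<le> infdist x A"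
  by (simp add: infdist_notempty cINF_greatest)

lemma infdist_closed_segment_geI:
  fixes a b c :: "'a::real_normed_vector"
  assumes "\<And>s. 0 \<le> s \<Longrightarrow> r \<le> norm ((c - b) + s *\<^sub>R (b - a))"
  shows "r \<le> infdist c (closed_segment a b)"
proof (rule infdist_geI)
  fix x assume "x \<in> closed_segment a b"
  then obtain t where t: "t \<le> 1" "x = (1 - t) *\<^sub>R a + t *\<^sub>R b"
    unfolding in_segment by auto
  have "c - x = (c - b) + (1 - t) *\<^sub>R (b - a)"
    using t(2) by (simp add: algebra_simps)
  then show "r \<le> dist c x"
    using assms[of "1 - t"] t(1) by (metis diff_ge_0_iff_ge dist_norm)
qed simp

lemma norm_add_scaleR_power2:
  fixes u w :: "'a::real_inner"
  shows "(norm (w + s *\<^sub>R u))\<^sup>2 = (norm w)\<^sup>2 + 2 * s * (u \<bullet> w) + s\<^sup>2 * (norm u)\<^sup>2"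
  by (simp only: power2_norm_eq_inner)
    (simp add: inner_add_left inner_add_right inner_commute power2_eq_square algebra_simps)

lemma norm_le_norm_add_scaleR:
  fixes u w :: "'a::real_inner"
  assumes "0 \<le> u \<bullet> w" "0 \<le> s"
  shows "norm w \<le> norm (w + s *\<^sub>R u)"
proof -
  have "(norm w)\<^sup>2 \<le> (norm (w + s *\<^sub>R u))\<^sup>2"
    unfolding norm_add_scaleR_power2 using assms by simp
  then show ?thesis
    by (rule power2_le_imp_le) simp
qed

lemma norm_add_scaleR_power2_ge:
  fixes u w :: "'a::real_inner"
  assumes "u \<noteq> 0"
  shows "(norm w)\<^sup>2 - (u \<bullet> w)\<^sup>2 / (norm u)\<^sup>2 \<le> (norm (w + s *\<^sub>R u))\<^sup>2"
proof -
  have "(norm u)\<^sup>2 * (norm (w + s *\<^sub>R u))\<^sup>2 - ((norm u)\<^sup>2 * (norm w)\<^sup>2 - (u \<bullet> w)\<^sup>2)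
        = (s * (norm u)\<^sup>2 + u \<bullet> w)\<^sup>2"
    unfolding norm_add_scaleR_power2 by (simp add: algebra_simps power2_eq_square)
  then have "(norm u)\<^sup>2 * (norm w)\<^sup>2 - (u \<bullet> w)\<^sup>2 \<le> (norm u)\<^sup>2 * (norm (w + s *\<^sub>R u))\<^sup>2"
    by (metis diff_ge_0_iff_ge zero_le_power2)
  then show ?thesis
    using assms by (simp add: field_simps)
qed

lemma infdist_closed_segment_ge_endpoint:
  fixes a b c :: "'a::real_inner"
  assumes "0 \<le> (b - a) \<bullet> (c - b)"
  shows "norm (c - b) \<le> infdist c (closed_segment a b)"
  by (rule infdist_closed_segment_geI, rule norm_le_norm_add_scaleR) (use assms in auto)

lemma inner_div_norms_bounds:
  fixes u w :: "'a::real_inner"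
  shows "-1 \<le> u \<bullet> w / (norm u * norm w)" "u \<bullet> w / (norm u * norm w) \<le> 1"
proof -
  have "\<bar>u \<bullet> w\<bar> \<le> norm u * norm w"
    by (rule Cauchy_Schwarz_ineq2)
  then have "\<bar>u \<bullet> w / (norm u * norm w)\<bar> \<le> 1"
    by (cases "u = 0 \<or> w = 0") (auto simp: abs_div divide_le_eq_1)
  then show "-1 \<le> u \<bullet> w / (norm u * norm w)" "u \<bullet> w / (norm u * norm w) \<le> 1"
    by (simp_all only: abs_le_iff) linarith
qed

lemma cos_vec_angle: "cos (vec_angle u w) = u \<bullet> w / (norm u * norm w)"
  unfolding vec_angle_def by (simp add: inner_div_norms_bounds)

lemma vec_angle_le_pi: "vec_angle u w \<le> pi"
  unfolding vec_angle_def by (simp add: arccos_ubound inner_div_norms_bounds)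

lemma pi_half_le_vec_angle_iff: "pi / 2 \<le> vec_angle u w \<longleftrightarrow> u \<bullet> w \<le> 0"
proof -
  have "pi / 2 \<le> vec_angle u w \<longleftrightarrow> u \<bullet> w / (norm u * norm w) \<le> 0"
    unfolding vec_angle_def arccos_0[symmetric]
    by (rule arccos_le_mono) (use inner_div_norms_bounds[of u w] in auto)
  also have "\<dots> \<longleftrightarrow> u \<bullet> w \<le> 0"
    by (cases "u = 0 \<or> w = 0") (auto simp: divide_le_0_iff mult_le_0_iff)
  finally show ?thesis .
qed

lemma vec_angle_neg_swap: "vec_angle (- w) (- u) = vec_angle u w"
  unfolding vec_angle_def by (simp add: inner_commute mult.commute)

lemma norm_mult_sin_vec_angle_le:
  fixes u w :: "real^3"
  shows "norm w * sin (vec_angle u w) \<le> norm (w + s *\<^sub>R u)"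
proof (cases "u = 0")
  case True
  then show ?thesis
    using sin_le_one[of "vec_angle u w"] by (simp add: mult_left_le)
next
  case False
  have "(norm w * sin (vec_angle u w))\<^sup>2 = (norm w)\<^sup>2 * (1 - (cos (vec_angle u w))\<^sup>2)"
    by (simp add: power_mult_distrib sin_squared_eq)
  also have "\<dots> = (norm w)\<^sup>2 - (u \<bullet> w)\<^sup>2 / (norm u)\<^sup>2"
    using False by (cases "w = 0")
      (simp_all add: cos_vec_angle power_divide power_mult_distrib right_diff_distrib)
  also have "\<dots> \<le> (norm (w + s *\<^sub>R u))\<^sup>2"
    using False by (rule norm_add_scaleR_power2_ge)
  finally show ?thesis
    by (rule power2_le_imp_le) simp
qed

lemma infdist_closed_segment_ge_sin:
  fixes a b c :: "real^3"
  shows "norm (c - b) * sin (vec_angle (b - a) (c - b)) \<le> infdist c (closed_segment a b)"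
  by (rule infdist_closed_segment_geI) (rule norm_mult_sin_vec_angle_le)

lemma div_tan_half_le_mult_sin:
  fixes \<theta> m w :: real
  assumes "pi / 2 \<le> \<theta>" "\<theta> \<le> pi" "0 \<le> m" "m \<le> w"
  shows "m / tan (\<theta> / 2) \<le> w * sin \<theta>"
proof (cases "\<theta> = pi")
  case True
  \<comment> \<open>here tan (pi / 2) = 0, since tan is sin / cos and x / 0 = 0\<close>
  then show ?thesis by simp
next
  case False
  define h where "h = \<theta> / 2"
  have "0 < h" "h < pi / 2"
    using assms False pi_gt_zero unfolding h_def by linarith+
  then have sin_pos: "0 < sin h" and cos_pos: "0 < cos h"
    by (simp_all add: sin_gt_zero cos_gt_zero)
  have "cos \<theta> \<le> cos (pi / 2)"
    using assms by (intro cos_monotone_0_pi_le) auto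
  then have "1 \<le> 2 * (sin h)\<^sup>2"
    using cos_double_sin[of h] unfolding h_def by simp
  then have "m \<le> w * (2 * (sin h)\<^sup>2)"
    using assms(3,4) by (metis mult.right_neutral mult_left_mono order_trans)
  then have "m * cos h \<le> w * (2 * (sin h)\<^sup>2) * cos h"
    using cos_pos by (simp add: mult_right_mono)
  also have "\<dots> = (w * (2 * sin h * cos h)) * sin h"
    by (simp add: power2_eq_square)
  finally have "m * cos h / sin h \<le> w * (2 * sin h * cos h)"
    using sin_pos by (simp add: pos_divide_le_eq)
  moreover have "m / tan (\<theta> / 2) = m * cos h / sin h"
    unfolding h_def[symmetric] tan_def by simp
  moreover have "sin \<theta> = 2 * sin h * cos h"
    using sin_double[of h] by (simp add: h_def)
  ultimately show ?thesis
    by simp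
qed

lemma infdist_closed_segment_ge_obtuse:
  fixes a b c :: "real^3"
  assumes "pi / 2 \<le> vec_angle (b - a) (c - b)"
  shows "min (norm (b - a)) (norm (c - b)) / tan (vec_angle (b - a) (c - b) / 2)
    \<le> infdist c (closed_segment a b)"
  using div_tan_half_le_mult_sin[OF assms vec_angle_le_pi,
      of "min (norm (b - a)) (norm (c - b))" "norm (c - b)"]
    infdist_closed_segment_ge_sin[of c b a]
  by (simp add: mult.commute)

definition corner_rad :: "real^3 \<Rightarrow> real^3 \<Rightarrow> real^3 \<Rightarrow> ereal" where
  "corner_rad a b c =
    (if vec_angle (b - a) (c - b) = 0 then \<infinity>
     else ereal (min (norm (b - a)) (norm (c - b)) / (2 * tan (vec_angle (b - a) (c - b) / 2))))"

lemma corner_rad_reverse: "corner_rad c b a = corner_rad a b c"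
  using vec_angle_neg_swap[of "c - b" "b - a"]
  unfolding corner_rad_def by (simp add: norm_minus_commute min.commute)

lemma two_corner_rad_le_infdist:
  assumes "pi / 2 \<le> vec_angle (b - a) (c - b)"
  shows "2 * corner_rad a b c \<le> ereal (infdist c (closed_segment a b))"
proof -
  have "vec_angle (b - a) (c - b) \<noteq> 0"
    using assms pi_gt_zero by linarith
  then show ?thesis
    using infdist_closed_segment_ge_obtuse[OF assms] unfolding corner_rad_def by simp
qed

lemma min_two_corner_rad_le_infdist:
  "min (2 * corner_rad a b c) (ereal (norm (c - b))) \<le> ereal (infdist c (closed_segment a b))"
proof (cases "0 \<le> (b - a) \<bullet> (c - b)")
  case True
  then have "ereal (norm (c - b)) \<le> ereal (infdist c (closed_segment a b))"
    using infdist_closed_segment_ge_endpoint by simp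
  then show ?thesis
    by (rule order_trans[OF min.cobounded2])
next
  case False
  then have "pi / 2 \<le> vec_angle (b - a) (c - b)"
    unfolding pi_half_le_vec_angle_iff by simp
  then show ?thesis
    by (rule order_trans[OF min.cobounded1 two_corner_rad_le_infdist])
qed

lemma Rad_eq_corner_rad: "Rad P n i = corner_rad (vx P n (i - 1)) (vx P n i) (vx P n (i + 1))"
  unfolding Rad_def corner_rad_def turn_angle_def edge_len_def
  by (simp add: dist_norm norm_minus_commute)

lemma edge_len_eq_norm: "edge_len P n i = norm (vx P n (i + 1) - vx P n i)"
  unfolding edge_len_def by (simp add: dist_norm norm_minus_commute)

lemma Min_periodic_le:
  fixes f :: "int \<Rightarrow> 'a::linorder"
  assumes "0 < n" "\<And>j. f (j mod int n) = f j"
  shows "Min (f ` {0..<int n}) \<le> f j"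
proof -
  have "j mod int n \<in> {0..<int n}"
    using assms(1) by simp
  then have "Min (f ` {0..<int n}) \<le> f (j mod int n)"
    by (intro Min_le) auto
  then show ?thesis
    unfolding assms(2) .
qed

lemma MinRad_le_Rad: "0 < n \<Longrightarrow> MinRad P n \<le> Rad P n j"
  unfolding MinRad_def
  by (rule Min_periodic_le) (simp_all add: Rad_eq_corner_rad vx_def mod_add_left_eq mod_diff_left_eq)

lemma MinEdge_le_edge_len: "0 < n \<Longrightarrow> MinEdge P n \<le> edge_len P n j"
  unfolding MinEdge_def
  by (rule Min_periodic_le) (simp_all add: edge_len_eq_norm vx_def mod_add_left_eq)

lemma knot_corner_infdist_lower_bounds:
  assumes "polygonal_knot P n"
    and "corner_rad a b c = Rad P n j" and "norm (c - b) = edge_len P n k"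
  shows "min (2 * MinRad P n) (ereal (MinEdge P n)) \<le> ereal (infdist c (closed_segment a b))"
    and "pi / 2 \<le> vec_angle (b - a) (c - b) \<Longrightarrow>
      2 * MinRad P n \<le> ereal (infdist c (closed_segment a b))"
proof -
  have "0 < n"
    using assms(1) unfolding polygonal_knot_def by simp
  have rad: "2 * MinRad P n \<le> 2 * corner_rad a b c"
    using MinRad_le_Rad[OF \<open>0 < n\<close>, of P j] assms(2) by (simp add: ereal_mult_left_mono)
  have edge: "MinEdge P n \<le> norm (c - b)"
    using MinEdge_le_edge_len[OF \<open>0 < n\<close>, of P k] assms(3) by simp
  have "min (2 * MinRad P n) (ereal (MinEdge P n))
      \<le> min (2 * corner_rad a b c) (ereal (norm (c - b)))"
    using rad edge by (intro min.mono) simp_all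
  also have "\<dots> \<le> ereal (infdist c (closed_segment a b))"
    by (rule min_two_corner_rad_le_infdist)
  finally show "min (2 * MinRad P n) (ereal (MinEdge P n)) \<le> ereal (infdist c (closed_segment a b))" .
  show "2 * MinRad P n \<le> ereal (infdist c (closed_segment a b))"
    if "pi / 2 \<le> vec_angle (b - a) (c - b)"
    using rad two_corner_rad_le_infdist[OF that] by (rule order_trans)
qed

theorem lemma3p3:
  fixes P :: "nat \<Rightarrow> real^3" and n :: nat and i :: int
  assumes "polygonal_knot P n"
  shows "ereal (MD (edge P n i) (vx P n (i + 2))) \<ge> min (2 * MinRad P n) (ereal (MinEdge P n))
     \<and> (turn_angle P n (i + 1) \<ge> pi / 2 \<longrightarrow> ereal (MD (edge P n i) (vx P n (i + 2))) \<ge> 2 * MinRad P n)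
     \<and> ereal (MD (edge P n i) (vx P n (i - 1))) \<ge> min (2 * MinRad P n) (ereal (MinEdge P n))
     \<and> (turn_angle P n i \<ge> pi / 2 \<longrightarrow> ereal (MD (edge P n i) (vx P n (i - 1))) \<ge> 2 * MinRad P n)"
proof -
  let ?v = "vx P n"
  have i2: "i + 1 + 1 = i + 2"
    by simp
  have angle: "turn_angle P n (i + 1) = vec_angle (?v (i + 1) - ?v i) (?v (i + 2) - ?v (i + 1))"
    "turn_angle P n i = vec_angle (?v i - ?v (i + 1)) (?v (i - 1) - ?v i)"
    unfolding turn_angle_def i2 by simp (simp flip: vec_angle_neg_swap[of "?v (i + 1) - ?v i"])
  have rad: "corner_rad (?v i) (?v (i + 1)) (?v (i + 2)) = Rad P n (i + 1)"
    "corner_rad (?v (i + 1)) (?v i) (?v (i - 1)) = Rad P n i"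
    by (simp_all only: Rad_eq_corner_rad corner_rad_reverse i2 add_diff_cancel_right')
  have len: "norm (?v (i + 2) - ?v (i + 1)) = edge_len P n (i + 1)"
    "norm (?v (i - 1) - ?v i) = edge_len P n (i - 1)"
    by (simp only: edge_len_eq_norm i2) (simp add: edge_len_eq_norm norm_minus_commute)
  note next_vertex = knot_corner_infdist_lower_bounds[OF assms rad(1) len(1)]
  note prev_vertex = knot_corner_infdist_lower_bounds[OF assms rad(2) len(2),
      unfolded closed_segment_commute[of "?v (i + 1)" "?v i"]]
  show ?thesis
    unfolding MD_def edge_def angle using next_vertex prev_vertex by blast
qed

end
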